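(* Let $G$ be a finite connected graph with nodes $\{1,\dots,n_v\}$ and edges $\{1,\dots,n_e\}$. Let $B\in\mathbb{R}^{n_e\times n_v}$ be its edge-vertex incidence matrix and $L=B^\top B$. Let $\varrho\in\{1,\dots,n_v\}$ be a node. Let $B_{\mathtt{C}\widehat\varrho}$ be $B$ restricted to the rows in $\mathtt{C}$ and with column $\varrho$ removed, and let $L_{\widehat\varrho\widehat\varrho}$ be $L$ with row and column $\varrho$ removed. Let $\mathtt{C}\subseteq\{1,\dots,n_e\}$ be such that $$\Big(\prod_{i\neq\varrho}\mathrm{deg}(i)\Big)^{-1}\det\begin{bmatrix}0_{|\mathtt{C}|}&B_{\mathtt{C}\widehat\varrho}\\-(B_{\mathtt{C}\widehat\varrho})^\top&\mathrm{skew}(L_{\widehat\varrho\widehat\varrho})\end{bmatrix}\neq0.$$ Then $\mathtt{C}$ is the set of (simple) edges of a dimer-rooted forest of $G$ with root $\varrho$.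
   Context: In the incidence matrix, each edge $e=(i,j)$ with $i<j$ has row $B_{e,:}$ with entry $+1$ at $i$, $-1$ at $j$, and $0$ elsewhere. $\mathrm{deg}(i)$ is the number of neighbours of node $i$. For a square matrix $M$, $\mathrm{skew}(M)=\mathrm{triu}(M)-\mathrm{triu}(M)^\top$, where $\mathrm{triu}$ is the upper-triangular part with respect to the node ordering. Rows and columns are taken in increasing index order. $0_m$ is the $m\times m$ zero matrix. Definition: a dimer-rooted forest of $G$ with root $\varrho$ is a set of edges $\mathtt{C}$ such that (i) $\mathtt{C}$ contains no cycle and $|\mathtt{C}|$ has the same parity as $n_v-1$; and (ii) $\mathtt{C}$ can be completed to a spanning subgraph by adding an edge-disjoint set of dimers (edges of $G$, not part of $\mathtt{C}$) such that each connected component of $\mathtt{C}$ is either a tree rooted at $\varrho$ or a tree rooted at one dimer. *)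

theory Defs
  imports "Jordan_Normal_Form.Determinant" "Jordan_Normal_Form.DL_Submatrix"
begin

text \<open>A graph with nodes 1..nv and edges 1..ne is given by ed :: nat => nat * nat;
  edge e (1 <= e <= ne) is ed e = (i,j) with 1 <= i < j <= nv.
  JNF matrices are 0-indexed: node i is column i-1, edge e is row e-1.\<close>

definition edge_graph :: "nat \<Rightarrow> nat \<Rightarrow> (nat \<Rightarrow> nat \<times> nat) \<Rightarrow> bool" where
  "edge_graph nv ne ed \<longleftrightarrow>
     (\<forall>e\<in>{1..ne}. 1 \<le> fst (ed e) \<and> fst (ed e) < snd (ed e) \<and> snd (ed e) \<le> nv)
     \<and> inj_on ed {1..ne}"

definition joins :: "(nat \<Rightarrow> nat \<times> nat) \<Rightarrow> nat \<Rightarrow> nat \<Rightarrow> nat \<Rightarrow> bool" where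
  "joins ed e u v \<longleftrightarrow> ed e = (u, v) \<or> ed e = (v, u)"

definition adj_rel :: "(nat \<Rightarrow> nat \<times> nat) \<Rightarrow> nat set \<Rightarrow> (nat \<times> nat) set" where
  "adj_rel ed S = {(u, v). \<exists>e\<in>S. joins ed e u v}"

definition connected_graph :: "nat \<Rightarrow> nat \<Rightarrow> (nat \<Rightarrow> nat \<times> nat) \<Rightarrow> bool" where
  "connected_graph nv ne ed \<longleftrightarrow>
     (\<forall>u\<in>{1..nv}. \<forall>v\<in>{1..nv}. (u, v) \<in> (adj_rel ed {1..ne})\<^sup>*)"

definition deg :: "nat \<Rightarrow> nat \<Rightarrow> (nat \<Rightarrow> nat \<times> nat) \<Rightarrow> nat \<Rightarrow> nat" where
  "deg nv ne ed i = card {j\<in>{1..nv}. \<exists>e\<in>{1..ne}. joins ed e i j}"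

definition incidence_mat :: "nat \<Rightarrow> nat \<Rightarrow> (nat \<Rightarrow> nat \<times> nat) \<Rightarrow> real mat" where
  "incidence_mat nv ne ed = mat ne nv (\<lambda>(r, c).
      if c + 1 = fst (ed (r + 1)) then 1
      else if c + 1 = snd (ed (r + 1)) then -1 else 0)"

definition laplacian_mat :: "nat \<Rightarrow> nat \<Rightarrow> (nat \<Rightarrow> nat \<times> nat) \<Rightarrow> real mat" where
  "laplacian_mat nv ne ed = transpose_mat (incidence_mat nv ne ed) * incidence_mat nv ne ed"

definition triu :: "'a::zero mat \<Rightarrow> 'a mat" where
  "triu M = mat (dim_row M) (dim_col M) (\<lambda>(i, j). if i \<le> j then M $$ (i, j) else 0)"

definition skew :: "'a::ab_group_add mat \<Rightarrow> 'a mat" where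
  "skew M = triu M - transpose_mat (triu M)"

definition B_C_rho :: "nat \<Rightarrow> nat \<Rightarrow> (nat \<Rightarrow> nat \<times> nat) \<Rightarrow> nat set \<Rightarrow> nat \<Rightarrow> real mat" where
  "B_C_rho nv ne ed C rho =
     submatrix (incidence_mat nv ne ed) ((\<lambda>e. e - 1) ` C) ({0..<nv} - {rho - 1})"

definition L_rho_rho :: "nat \<Rightarrow> nat \<Rightarrow> (nat \<Rightarrow> nat \<times> nat) \<Rightarrow> nat \<Rightarrow> real mat" where
  "L_rho_rho nv ne ed rho =
     submatrix (laplacian_mat nv ne ed) ({0..<nv} - {rho - 1}) ({0..<nv} - {rho - 1})"

definition block_mat :: "nat \<Rightarrow> nat \<Rightarrow> (nat \<Rightarrow> nat \<times> nat) \<Rightarrow> nat set \<Rightarrow> nat \<Rightarrow> real mat" where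
  "block_mat nv ne ed C rho =
     four_block_mat (0\<^sub>m (card C) (card C)) (B_C_rho nv ne ed C rho)
        (- transpose_mat (B_C_rho nv ne ed C rho)) (skew (L_rho_rho nv ne ed rho))"

definition has_cycle :: "(nat \<Rightarrow> nat \<times> nat) \<Rightarrow> nat set \<Rightarrow> bool" where
  "has_cycle ed S \<longleftrightarrow> (\<exists>es vs. es \<noteq> [] \<and> length vs = length es \<and> distinct es \<and> distinct vs
       \<and> set es \<subseteq> S
       \<and> (\<forall>k<length es. joins ed (es ! k) (vs ! k) (vs ! ((k + 1) mod length es))))"

definition components :: "nat \<Rightarrow> (nat \<Rightarrow> nat \<times> nat) \<Rightarrow> nat set \<Rightarrow> nat set set" where
  "components nv ed C = {{v\<in>{1..nv}. (u, v) \<in> (adj_rel ed C)\<^sup>*} | u. u \<in> {1..nv}}"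

definition touches :: "(nat \<Rightarrow> nat \<times> nat) \<Rightarrow> nat \<Rightarrow> nat set \<Rightarrow> bool" where
  "touches ed d K \<longleftrightarrow> fst (ed d) \<in> K \<or> snd (ed d) \<in> K"

text \<open>Dimer-rooted forest with root rho: (i) no cycle and parity of |C| equals that of nv-1;
  (ii) there is a set D of dimers (edges of G not in C) such that every component of C is a tree
  either rooted at rho (contains rho, touched by no dimer) or rooted at one dimer
  (does not contain rho, touched by exactly one dimer, at exactly one of its endpoints).\<close>
definition dimer_rooted_forest ::
  "nat \<Rightarrow> nat \<Rightarrow> (nat \<Rightarrow> nat \<times> nat) \<Rightarrow> nat \<Rightarrow> nat set \<Rightarrow> bool" where
  "dimer_rooted_forest nv ne ed rho C \<longleftrightarrow>
     C \<subseteq> {1..ne} \<and> \<not> has_cycle ed C \<and> even (card C + (nv - 1))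
     \<and> (\<exists>D. D \<subseteq> {1..ne} \<and> D \<inter> C = {} \<and>
          (\<forall>K\<in>components nv ed C.
              (rho \<in> K \<and> (\<forall>d\<in>D. \<not> touches ed d K))
            \<or> (rho \<notin> K \<and> (\<exists>!d. d \<in> D \<and> touches ed d K)
                 \<and> (\<forall>d\<in>D. touches ed d K \<longrightarrow> \<not> (fst (ed d) \<in> K \<and> snd (ed d) \<in> K)))))"

end

theory Submission
  imports Defs "HOL-Combinatorics.Orbits" "HOL-Combinatorics.Cycles"
begin

text \<open>
  The block matrix is skew-symmetric. In the permutation expansion of its determinant, reversing
  one odd cycle of a permutation keeps the sign and negates the product of entries, so only
  permutations with even cycles contribute. A nonzero determinant therefore yields a perfect
  matching of the rows supported on nonzero entries; in particular \<open>card C + (nv - 1)\<close> is even.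
  A cycle in \<open>C\<close> would give a nonzero kernel vector, its signed edge indicator, so \<open>C\<close> is a
  forest. In the matching every edge of \<open>C\<close> is paired with one of its ends, its child, injectively
  and never with \<open>rho\<close>; the other nodes except \<open>rho\<close> are paired among themselves through nonzero
  off-diagonal Laplacian entries, that is, along edges of the graph: these pairs are the dimers.
  Walking from a child along its edge towards the other end never returns, so each component of
  \<open>C\<close> contains exactly one node that is not a child: either \<open>rho\<close>, or a node covered by exactly
  one dimer, whose other end lies in another component.
\<close>

section \<open>Perfect matchings from skew-symmetric determinants\<close>

definition perfect_matching_on :: "'a set \<Rightarrow> ('a \<Rightarrow> 'a) \<Rightarrow> bool" where
  "perfect_matching_on S m \<longleftrightarrow> (\<forall>x\<in>S. m x \<in> S \<and> m x \<noteq> x \<and> m (m x) = x)"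

lemma perfect_matching_on_even_card:
  assumes "finite S" "perfect_matching_on S m"
  shows "even (card S)"
  using assms
proof (induction "card S" arbitrary: S rule: less_induct)
  case less
  show ?case
  proof (cases "S = {}")
    case False
    then obtain x where x: "x \<in> S" by blast
    let ?S' = "S - {x, m x}"
    have mx: "m x \<in> S" "m x \<noteq> x" "m (m x) = x"
      using less.prems(2) x unfolding perfect_matching_on_def by auto
    have "card {x, m x} \<le> card S" using less.prems(1) x mx(1) by (intro card_mono) auto
    hence card: "card S = card ?S' + 2"
      using less.prems(1) x mx by (simp add: card_Diff_subset)
    have "perfect_matching_on ?S' m"
      unfolding perfect_matching_on_def
    proof
      fix y assume y: "y \<in> ?S'"
      have my: "m y \<in> S" "m y \<noteq> y" "m (m y) = y"
        using less.prems(2) y unfolding perfect_matching_on_def by auto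
      have "m y \<noteq> x" using y my(3) by (metis DiffD2 insertCI)
      moreover have "m y \<noteq> m x" using y my(3) mx(3) by (metis DiffD2 insertCI)
      ultimately show "m y \<in> ?S' \<and> m y \<noteq> y \<and> m (m y) = y" using my by blast
    qed
    hence "even (card ?S')" using less.hyps[of ?S'] less.prems(1) card by simp
    thus ?thesis using card by simp
  qed simp
qed

lemma perfect_matching_on_bij_betw:
  assumes "bij_betw f A B" "perfect_matching_on A m"
  shows "perfect_matching_on B (f \<circ> m \<circ> inv_into A f)"
  unfolding perfect_matching_on_def
proof
  let ?m = "f \<circ> m \<circ> inv_into A f"
  fix y assume "y \<in> B"
  then obtain x where x: "x \<in> A" "y = f x" using assms(1) by (auto simp: bij_betw_def)
  have inj: "inj_on f A" using assms(1) by (rule bij_betw_imp_inj_on)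
  have mx: "m x \<in> A" "m x \<noteq> x" "m (m x) = x"
    using assms(2) x(1) unfolding perfect_matching_on_def by auto
  have "?m y = f (m x)" using x inj by (simp add: inv_into_f_f)
  moreover have "?m (f (m x)) = y" using x mx inj by (simp add: inv_into_f_f)
  moreover have "f (m x) \<in> B" using assms(1) mx(1) by (rule bij_betw_apply)
  moreover have "f (m x) \<noteq> y" using x mx inj by (simp add: inj_on_eq_iff)
  ultimately show "?m y \<in> B \<and> ?m y \<noteq> y \<and> ?m (?m y) = y" by simp
qed

lemma inj_on_funpow_least_power:
  assumes "permutation p"
  shows "inj_on (\<lambda>k. (p ^^ k) x) {..<least_power p x}"
  using cycle_of_permutation[OF assms, of x] by (simp add: distinct_map atLeast_upt)

lemma card_orbit_eq_least_power:
  assumes "permutation p"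
  shows "card (orbit p x) = least_power p x"
proof -
  have "(p ^^ least_power p x) x = x" "0 < least_power p x"
    using least_power_of_permutation[OF assms] by auto
  hence "orbit p x = {(p ^^ k) x | k. k < least_power p x}" by (rule orbit_altdef_bounded)
  hence "orbit p x = (\<lambda>k. (p ^^ k) x) ` {..<least_power p x}" by auto
  thus ?thesis using inj_on_funpow_least_power[OF assms] by (simp add: card_image)
qed

lemma funpow_dist_funpow:
  assumes "permutation p" "k < least_power p x"
  shows "funpow_dist p x ((p ^^ k) x) = k"
proof -
  let ?d = "funpow_dist p x ((p ^^ k) x)"
  have "?d \<le> k" unfolding funpow_dist_def by (rule Least_le) simp
  moreover have "(p ^^ k) x \<in> orbit p x"
    using funpow_in_orbit[OF permutation_self_in_orbit[OF assms(1)]] .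
  hence "(p ^^ ?d) x = (p ^^ k) x" by (rule funpow_dist_prop)
  ultimately show ?thesis
    using inj_onD[OF inj_on_funpow_least_power[OF assms(1)]] assms(2) by simp
qed

text \<open>The inverse is written \<open>inv_into UNIV p\<close>: with HOL-Algebra loaded, the syntax \<open>inv\<close>
  denotes the group inverse.\<close>
lemma orbit_inv_closed:
  assumes "permutation p" "y \<in> orbit p x"
  shows "inv_into UNIV p y \<in> orbit p x"
  using orbit.step[of y "inv_into UNIV p" x] assms orbit_inv_eq[OF assms(1)] by simp

definition reverse_orbit :: "('a \<Rightarrow> 'a) \<Rightarrow> 'a \<Rightarrow> 'a \<Rightarrow> 'a" where
  "reverse_orbit p x y = (if y \<in> orbit p x then inv_into UNIV p y else p y)"

context
  fixes p :: "'a \<Rightarrow> 'a" and S :: "'a set"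
  assumes p: "p permutes S" and fin: "finite S"
begin

private lemma perm: "permutation p"
  using permutes_imp_permutation[OF fin p] .

lemma perm_restrict_inv_orbit_permutes:
  "perm_restrict (inv_into UNIV p) (orbit p x) permutes orbit p x"
proof (rule inj_imp_permutes)
  show "finite (orbit p x)" using finite_orbit[OF permutation_self_in_orbit[OF perm]] .
  show "inj_on (perm_restrict (inv_into UNIV p) (orbit p x)) (orbit p x)"
    by (rule inj_onI) (metis perm_restrict_simps(1) permutes_inverses(1)[OF p])
qed (auto simp: perm_restrict_def orbit_inv_closed[OF perm])

private lemma permutation_perm_restrict_inv_orbit:
  "permutation (perm_restrict (inv_into UNIV p) (orbit p x))"
  using perm_restrict_inv_orbit_permutes finite_orbit[OF permutation_self_in_orbit[OF perm]]
  by (blast intro: permutes_imp_permutation)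

text \<open>Writing the reversal as \<open>p\<close> composed with a square shows that it has the sign of \<open>p\<close>.\<close>
lemma reverse_orbit_eq_comp:
  "reverse_orbit p x =
     p \<circ> perm_restrict (inv_into UNIV p) (orbit p x) \<circ> perm_restrict (inv_into UNIV p) (orbit p x)"
proof
  fix y
  show "reverse_orbit p x y = (p \<circ> perm_restrict (inv_into UNIV p) (orbit p x)
          \<circ> perm_restrict (inv_into UNIV p) (orbit p x)) y"
    by (cases "y \<in> orbit p x") (simp_all add: reverse_orbit_def perm_restrict_simps
        orbit_inv_closed[OF perm] permutes_inverses[OF p])
qed

lemma reverse_orbit_permutes:
  assumes "x \<in> S"
  shows "reverse_orbit p x permutes S"
proof -
  have "perm_restrict (inv_into UNIV p) (orbit p x) permutes S"
    using perm_restrict_inv_orbit_permutes permutes_orbit_subset[OF p assms] permutes_subset by blast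
  thus ?thesis unfolding reverse_orbit_eq_comp by (intro permutes_compose p)
qed

lemma permutation_reverse_orbit: "permutation (reverse_orbit p x)"
  unfolding reverse_orbit_eq_comp
  by (simp add: perm permutation_compose permutation_perm_restrict_inv_orbit)

lemma sign_reverse_orbit: "sign (reverse_orbit p x) = sign p"
proof -
  let ?r = "perm_restrict (inv_into UNIV p) (orbit p x)"
  have "sign (reverse_orbit p x) = sign p * (sign ?r * sign ?r)"
    unfolding reverse_orbit_eq_comp o_assoc[symmetric]
    by (simp add: sign_compose perm permutation_compose permutation_perm_restrict_inv_orbit)
  thus ?thesis by simp
qed

lemma orbit_reverse_orbit: "orbit (reverse_orbit p x) y = orbit p y"
proof (cases "y \<in> orbit p x")
  case True
  have "orbit p y = orbit p x" using orbit_cyclic_eq3[OF cyclic_on_orbit'[OF perm] True] .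
  hence "orbit (reverse_orbit p x) y = orbit (inv_into UNIV p) y"
    using True orbit_inv_closed[OF perm] by (intro orbit_cong0) (auto simp: reverse_orbit_def)
  thus ?thesis using orbit_inv_eq[OF perm] by simp
next
  case False
  have "orbit p y \<inter> orbit p x = {}"
    using False orbit_cyclic_eq3[OF cyclic_on_orbit'[OF perm]] permutation_self_in_orbit[OF perm]
    by blast
  thus ?thesis
    by (intro orbit_cong0[OF permutation_self_in_orbit[OF perm]])
       (auto simp: reverse_orbit_def intro: orbit.step)
qed

lemma reverse_orbit_reverse_orbit: "reverse_orbit (reverse_orbit p x) x = p"
proof
  fix y
  show "reverse_orbit (reverse_orbit p x) x y = p y"
  proof (cases "y \<in> orbit p x")
    case True
    have "p y \<in> orbit p x" using True by (rule orbit.step)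
    hence "reverse_orbit p x (p y) = y" by (simp add: reverse_orbit_def permutes_inverses[OF p])
    moreover have "inj (reverse_orbit p x)"
      using permutation_bijective[OF permutation_reverse_orbit] by (rule bij_is_inj)
    ultimately have "inv_into UNIV (reverse_orbit p x) y = p y" by (metis inv_f_f)
    thus ?thesis using True by (simp add: reverse_orbit_def orbit_reverse_orbit)
  next
    case False
    thus ?thesis by (simp add: reverse_orbit_def orbit_reverse_orbit)
  qed
qed

lemma bij_betw_orbit: "bij_betw p (orbit p x) (orbit p x)"
proof (rule bij_betw_imageI)
  show "inj_on p (orbit p x)" using permutes_inj_on[OF p] .
  show "p ` orbit p x = orbit p x"
  proof
    show "p ` orbit p x \<subseteq> orbit p x" by (auto intro: orbit.step)
    show "orbit p x \<subseteq> p ` orbit p x"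
      using orbit_inv_closed[OF perm] permutes_inverses(1)[OF p] by (metis image_eqI subsetI)
  qed
qed

lemma prod_reverse_orbit:
  fixes a :: "'a \<Rightarrow> 'a \<Rightarrow> 'b::comm_ring_1"
  assumes "x \<in> S" "odd (card (orbit p x))"
    and skew: "\<And>i j. i \<in> S \<Longrightarrow> j \<in> S \<Longrightarrow> a i j = - a j i"
  shows "(\<Prod>i\<in>S. a i (reverse_orbit p x i)) = - (\<Prod>i\<in>S. a i (p i))"
proof -
  let ?O = "orbit p x"
  have sub: "?O \<subseteq> S" using permutes_orbit_subset[OF p assms(1)] .
  have "(\<Prod>i\<in>?O. a i (reverse_orbit p x i)) = (\<Prod>i\<in>?O. a i (inv_into UNIV p i))"
    by (rule prod.cong) (simp_all add: reverse_orbit_def)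
  also have "\<dots> = (\<Prod>j\<in>?O. a (p j) j)"
    using prod.reindex_bij_betw[OF bij_betw_orbit, of "\<lambda>i. a i (inv_into UNIV p i)"]
    by (simp add: permutes_inverses[OF p])
  also have "\<dots> = (\<Prod>j\<in>?O. - a j (p j))"
  proof (rule prod.cong[OF refl])
    fix j assume j: "j \<in> ?O"
    hence "p j \<in> ?O" by (rule orbit.step)
    hence "p j \<in> S" "j \<in> S" using sub j by auto
    thus "a (p j) j = - a j (p j)" by (rule skew)
  qed
  also have "\<dots> = - (\<Prod>j\<in>?O. a j (p j))"
    using assms(2) by (simp add: prod_uminus)
  finally have "(\<Prod>i\<in>?O. a i (reverse_orbit p x i)) = - (\<Prod>j\<in>?O. a j (p j))" .
  moreover have "(\<Prod>i\<in>S - ?O. a i (reverse_orbit p x i)) = (\<Prod>i\<in>S - ?O. a i (p i))"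
    by (rule prod.cong) (simp_all add: reverse_orbit_def)
  ultimately show ?thesis
    using prod.subset_diff[OF sub fin, of "\<lambda>i. a i (reverse_orbit p x i)"]
      prod.subset_diff[OF sub fin, of "\<lambda>i. a i (p i)"] by simp
qed

end

definition odd_orbit_points :: "('a \<Rightarrow> 'a) \<Rightarrow> 'a set \<Rightarrow> 'a set" where
  "odd_orbit_points p S = {x \<in> S. odd (card (orbit p x))}"

text \<open>The reversed orbit is chosen from the set of odd-orbit points alone, which reversing
  preserves; hence flipping twice reverses the same orbit twice.\<close>
definition flip_odd_orbit :: "'a set \<Rightarrow> ('a \<Rightarrow> 'a) \<Rightarrow> 'a \<Rightarrow> 'a" where
  "flip_odd_orbit S p = reverse_orbit p (SOME x. x \<in> odd_orbit_points p S)"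

lemma flip_odd_orbit:
  fixes a :: "'a \<Rightarrow> 'a \<Rightarrow> 'b::comm_ring_1"
  assumes p: "p permutes S" and fin: "finite S" and odd: "odd_orbit_points p S \<noteq> {}"
    and skew: "\<And>i j. i \<in> S \<Longrightarrow> j \<in> S \<Longrightarrow> a i j = - a j i"
  shows "flip_odd_orbit S p permutes S"
    and "odd_orbit_points (flip_odd_orbit S p) S = odd_orbit_points p S"
    and "flip_odd_orbit S (flip_odd_orbit S p) = p"
    and "of_int (sign (flip_odd_orbit S p)) * (\<Prod>i\<in>S. a i (flip_odd_orbit S p i))
           = - (of_int (sign p) * (\<Prod>i\<in>S. a i (p i)))"
proof -
  define x where "x = (SOME x. x \<in> odd_orbit_points p S)"
  have x: "x \<in> S" "odd (card (orbit p x))"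
    using someI_ex[of "\<lambda>x. x \<in> odd_orbit_points p S"] odd
    unfolding x_def odd_orbit_points_def by auto
  have flip: "flip_odd_orbit S p = reverse_orbit p x" unfolding flip_odd_orbit_def x_def ..
  show "flip_odd_orbit S p permutes S" unfolding flip using reverse_orbit_permutes[OF p fin x(1)] .
  show same: "odd_orbit_points (flip_odd_orbit S p) S = odd_orbit_points p S"
    unfolding flip odd_orbit_points_def orbit_reverse_orbit[OF p fin] ..
  show "flip_odd_orbit S (flip_odd_orbit S p) = p"
    unfolding flip_odd_orbit_def[of S "flip_odd_orbit S p"] same
    unfolding flip x_def[symmetric] by (rule reverse_orbit_reverse_orbit[OF p fin])
  show "of_int (sign (flip_odd_orbit S p)) * (\<Prod>i\<in>S. a i (flip_odd_orbit S p i))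
           = - (of_int (sign p) * (\<Prod>i\<in>S. a i (p i)))"
    unfolding flip using sign_reverse_orbit[OF p fin] prod_reverse_orbit[where a = a, OF p fin x skew]
    by simp
qed

lemma sum_sign_reversing_involution_eq_0:
  fixes f :: "'a \<Rightarrow> 'b::{idom,ring_char_0}"
  assumes "\<And>x. x \<in> A \<Longrightarrow> h x \<in> A" "\<And>x. x \<in> A \<Longrightarrow> h (h x) = x"
    and "\<And>x. x \<in> A \<Longrightarrow> f (h x) = - f x"
  shows "sum f A = 0"
proof -
  have "sum f A = sum (f \<circ> h) A"
    by (rule sum.reindex_bij_witness[of A h h]) (use assms in auto)
  also have "\<dots> = - sum f A" using assms(3) by (simp add: sum_negf)
  finally show ?thesis by simp
qed

lemma det_skew_eq_sum_even_orbits: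
  fixes A :: "'a::{idom,ring_char_0} mat"
  assumes A: "A \<in> carrier_mat n n" and skew: "transpose_mat A = - A"
  shows "det A = (\<Sum>p | p permutes {0..<n} \<and> odd_orbit_points p {0..<n} = {}.
                   of_int (sign p) * (\<Prod>i=0..<n. A $$ (i, p i)))"
proof -
  let ?f = "\<lambda>p. of_int (sign p) * (\<Prod>i=0..<n. A $$ (i, p i)) :: 'a"
  let ?P = "{p. p permutes {0..<n}}"
  let ?E = "{p. odd_orbit_points p {0..<n} = {}}"
  have skewA: "A $$ (i, j) = - A $$ (j, i)" if "i \<in> {0..<n}" "j \<in> {0..<n}" for i j
    using that A arg_cong[OF skew, of "\<lambda>M. M $$ (j, i)"] by auto
  have "sum ?f (?P - ?E) = 0"
  proof (rule sum_sign_reversing_involution_eq_0[where h = "flip_odd_orbit {0..<n}"])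
    fix p assume "p \<in> ?P - ?E"
    hence p: "p permutes {0..<n}" "odd_orbit_points p {0..<n} \<noteq> {}" by auto
    note flip = flip_odd_orbit[where a = "\<lambda>i j. A $$ (i, j)", OF p(1) finite_atLeastLessThan p(2) skewA]
    show "flip_odd_orbit {0..<n} p \<in> ?P - ?E" using flip(1,2) p(2) by simp
    show "flip_odd_orbit {0..<n} (flip_odd_orbit {0..<n} p) = p" by (rule flip(3))
    show "?f (flip_odd_orbit {0..<n} p) = - ?f p" by (rule flip(4))
  qed
  moreover have "sum ?f ?P = sum ?f (?P \<inter> ?E) + sum ?f (?P - ?E)"
    by (rule sum.Int_Diff) (simp add: finite_permutations)
  ultimately show ?thesis unfolding det_def'[OF A] by (simp add: Collect_conj_eq)
qed

text \<open>\<open>orbit_base p x\<close> depends only on the orbit of \<open>x\<close>, so \<open>orbit_pos\<close> numbers every cycle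
  consecutively from \<open>0\<close>.\<close>
definition orbit_base :: "('a \<Rightarrow> 'a) \<Rightarrow> 'a \<Rightarrow> 'a" where
  "orbit_base p x = (SOME y. y \<in> orbit p x)"

definition orbit_pos :: "('a \<Rightarrow> 'a) \<Rightarrow> 'a \<Rightarrow> nat" where
  "orbit_pos p x = funpow_dist p (orbit_base p x) x"

context
  fixes p :: "'a \<Rightarrow> 'a"
  assumes perm: "permutation p"
begin

lemma orbit_orbit_base: "orbit p (orbit_base p x) = orbit p x"
  using someI[of "\<lambda>y. y \<in> orbit p x", OF permutation_self_in_orbit[OF perm]]
    orbit_cyclic_eq3[OF cyclic_on_orbit'[OF perm]] unfolding orbit_base_def by blast

lemma orbit_base_eq: "y \<in> orbit p x \<Longrightarrow> orbit_base p y = orbit_base p x"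
  unfolding orbit_base_def by (simp add: orbit_cyclic_eq3[OF cyclic_on_orbit'[OF perm]])

lemma card_orbit_orbit_base: "card (orbit p x) = least_power p (orbit_base p x)"
  using card_orbit_eq_least_power[OF perm, of "orbit_base p x"] orbit_orbit_base by simp

lemma orbit_pos: "orbit_pos p x < card (orbit p x)" "(p ^^ orbit_pos p x) (orbit_base p x) = x"
proof -
  let ?b = "orbit_base p x"
  have "(p ^^ least_power p ?b) ?b = ?b" "0 < least_power p ?b"
    using least_power_of_permutation[OF perm] by auto
  hence "orbit p ?b = {(p ^^ k) ?b | k. k < least_power p ?b}" by (rule orbit_altdef_bounded)
  moreover have "x \<in> orbit p ?b" using orbit_orbit_base permutation_self_in_orbit[OF perm] by simp
  ultimately obtain k where k: "k < least_power p ?b" "(p ^^ k) ?b = x" by auto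
  hence "orbit_pos p x = k" unfolding orbit_pos_def using funpow_dist_funpow[OF perm k(1)] by simp
  thus "orbit_pos p x < card (orbit p x)" "(p ^^ orbit_pos p x) ?b = x"
    using k card_orbit_orbit_base by simp_all
qed

lemma orbit_pos_funpow:
  assumes "k < card (orbit p x)"
  shows "orbit_pos p ((p ^^ k) (orbit_base p x)) = k"
proof -
  have "(p ^^ k) (orbit_base p x) \<in> orbit p x"
    using funpow_in_orbit[OF permutation_self_in_orbit[OF perm]] orbit_orbit_base by blast
  hence "orbit_base p ((p ^^ k) (orbit_base p x)) = orbit_base p x" by (rule orbit_base_eq)
  thus ?thesis unfolding orbit_pos_def
    using funpow_dist_funpow[OF perm] assms card_orbit_orbit_base by simp
qed

end

text \<open>On a cycle of even length, alternately pairing each point with its image and its preimage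
  under \<open>p\<close> matches the points of the cycle.\<close>
lemma even_orbits_perfect_matching:
  assumes p: "p permutes S" and fin: "finite S" and even: "odd_orbit_points p S = {}"
  shows "\<exists>m. perfect_matching_on S m \<and> (\<forall>x\<in>S. m x = p x \<or> m x = inv_into UNIV p x)"
proof -
  have perm: "permutation p" using permutes_imp_permutation[OF fin p] .
  define m where "m x = (if even (orbit_pos p x) then p x else inv_into UNIV p x)" for x
  have even_card: "even (card (orbit p x))" if "x \<in> S" for x
    using even that unfolding odd_orbit_points_def by auto
  have p_ne: "p x \<noteq> x" if "x \<in> S" for x
    using even_card[OF that] orbit_eq_singleton_iff[of p x] by auto
  have even_step: "m x = p x \<and> m (p x) = x" if "x \<in> S" "even (orbit_pos p x)" for x
  proof -
    have "odd (Suc (orbit_pos p x))" using that(2) by simp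
    hence "Suc (orbit_pos p x) \<noteq> card (orbit p x)" using even_card[OF that(1)] by metis
    hence "Suc (orbit_pos p x) < card (orbit p x)" using orbit_pos(1)[OF perm, of x] by linarith
    hence "orbit_pos p (p x) = Suc (orbit_pos p x)"
      using orbit_pos_funpow[OF perm] orbit_pos(2)[OF perm, of x] by (metis funpow.simps(2) o_apply)
    thus ?thesis unfolding m_def using that(2) permutes_inverses(2)[OF p] by simp
  qed
  have "m x \<in> S \<and> m x \<noteq> x \<and> m (m x) = x" if x: "x \<in> S" for x
  proof (cases "even (orbit_pos p x)")
    case True
    thus ?thesis using even_step[OF x] p_ne[OF x] permutes_in_image[OF p] x by simp
  next
    case False
    let ?y = "inv_into UNIV p x"
    have y: "p ?y = x" using permutes_inverses(1)[OF p] .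
    hence "?y \<in> S" using x permutes_in_image[OF p, of ?y] by auto
    obtain k where k: "orbit_pos p x = Suc k" using False by (cases "orbit_pos p x") auto
    have "p ((p ^^ k) (orbit_base p x)) = x" using orbit_pos(2)[OF perm, of x] k by simp
    hence "(p ^^ k) (orbit_base p x) = ?y"
      using permutes_inverses(2)[OF p, of "(p ^^ k) (orbit_base p x)"] by simp
    moreover have "k < card (orbit p x)" using orbit_pos(1)[OF perm, of x] k by simp
    ultimately have "orbit_pos p ?y = k" using orbit_pos_funpow[OF perm] by metis
    hence "m x = ?y" "m ?y = x" using even_step[OF \<open>?y \<in> S\<close>] False k y unfolding m_def by auto
    thus ?thesis using \<open>?y \<in> S\<close> p_ne[OF \<open>?y \<in> S\<close>] y by auto
  qed
  moreover have "\<forall>x\<in>S. m x = p x \<or> m x = inv_into UNIV p x" unfolding m_def by simp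
  ultimately show ?thesis unfolding perfect_matching_on_def by blast
qed

theorem skew_det_nonzero_imp_perfect_matching:
  fixes A :: "'a::{idom,ring_char_0} mat"
  assumes A: "A \<in> carrier_mat n n" and skew: "transpose_mat A = - A" and det: "det A \<noteq> 0"
  shows "\<exists>m. perfect_matching_on {0..<n} m \<and> (\<forall>i<n. A $$ (i, m i) \<noteq> 0)"
proof -
  obtain p where "p \<in> {p. p permutes {0..<n} \<and> odd_orbit_points p {0..<n} = {}}"
    and "of_int (sign p) * (\<Prod>i=0..<n. A $$ (i, p i)) \<noteq> 0"
    using det unfolding det_skew_eq_sum_even_orbits[OF A skew]
    by (rule sum.not_neutral_contains_not_neutral)
  hence p: "p permutes {0..<n}" "odd_orbit_points p {0..<n} = {}"
    and nz: "(\<Prod>i=0..<n. A $$ (i, p i)) \<noteq> 0" by auto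
  obtain m where m: "perfect_matching_on {0..<n} m"
    "\<forall>i\<in>{0..<n}. m i = p i \<or> m i = inv_into UNIV p i"
    using even_orbits_perfect_matching[OF p(1) finite_atLeastLessThan p(2)] by blast
  have "A $$ (i, m i) \<noteq> 0" if "i < n" for i
  proof (cases "m i = p i")
    case True
    thus ?thesis using nz that by simp
  next
    case False
    let ?j = "inv_into UNIV p i"
    have "p ?j = i" using permutes_inverses(1)[OF p(1)] .
    hence "?j < n" using that permutes_in_image[OF p(1), of ?j] by simp
    hence "A $$ (i, ?j) = - A $$ (?j, p ?j)"
      using that \<open>p ?j = i\<close> A arg_cong[OF skew, of "\<lambda>M. M $$ (?j, i)"] by auto
    moreover have "A $$ (?j, p ?j) \<noteq> 0" using nz \<open>?j < n\<close> by simp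
    ultimately show ?thesis using m(2) that False by auto
  qed
  thus ?thesis using m(1) by blast
qed

section \<open>Incidence and Laplacian matrices\<close>

lemma incidence_mat_dim:
  "dim_row (incidence_mat nv ne ed) = ne" "dim_col (incidence_mat nv ne ed) = nv"
  unfolding incidence_mat_def by simp_all

lemma laplacian_mat_dim:
  "dim_row (laplacian_mat nv ne ed) = nv" "dim_col (laplacian_mat nv ne ed) = nv"
  unfolding laplacian_mat_def incidence_mat_def by simp_all

lemma incidence_mat_index:
  assumes "e \<in> {1..ne}" "v \<in> {1..nv}"
  shows "incidence_mat nv ne ed $$ (e - 1, v - 1)
           = (if v = fst (ed e) then 1 else if v = snd (ed e) then -1 else 0)"
  using assms unfolding incidence_mat_def by auto

lemma laplacian_mat_index:
  assumes "x < nv" "y < nv"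
  shows "laplacian_mat nv ne ed $$ (x, y)
           = (\<Sum>r<ne. incidence_mat nv ne ed $$ (r, x) * incidence_mat nv ne ed $$ (r, y))"
  using assms unfolding laplacian_mat_def
  by (simp add: incidence_mat_def scalar_prod_def lessThan_atLeast0)

lemma joins_if_laplacian_nonzero:
  assumes u: "u \<in> {1..nv}" and v: "v \<in> {1..nv}" and "u \<noteq> v"
    and nz: "laplacian_mat nv ne ed $$ (u - 1, v - 1) \<noteq> 0"
  shows "\<exists>e\<in>{1..ne}. joins ed e u v"
proof -
  let ?B = "incidence_mat nv ne ed"
  have "(\<Sum>r<ne. ?B $$ (r, u - 1) * ?B $$ (r, v - 1)) \<noteq> 0"
    using nz u v laplacian_mat_index[of "u - 1" nv "v - 1" ne ed] by fastforce
  then obtain r where r: "r \<in> {..<ne}" "?B $$ (r, u - 1) * ?B $$ (r, v - 1) \<noteq> 0"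
    by (rule sum.not_neutral_contains_not_neutral)
  hence e: "Suc r \<in> {1..ne}"
    and "?B $$ (Suc r - 1, u - 1) \<noteq> 0" "?B $$ (Suc r - 1, v - 1) \<noteq> 0" by auto
  hence "u \<in> {fst (ed (Suc r)), snd (ed (Suc r))}" "v \<in> {fst (ed (Suc r)), snd (ed (Suc r))}"
    using incidence_mat_index[OF e u] incidence_mat_index[OF e v] by (auto split: if_splits)
  hence "joins ed (Suc r) u v" using \<open>u \<noteq> v\<close> by (auto simp: joins_def prod_eq_iff)
  thus ?thesis using e by blast
qed

lemma oriented_incidence_row:
  assumes "edge_graph nv ne ed" "e \<in> {1..ne}" "v \<in> {1..nv}" "joins ed e a b"
  shows "(if fst (ed e) = a then 1 else -1) * incidence_mat nv ne ed $$ (e - 1, v - 1)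
           = (if v = a then 1 else 0) - (if v = b then 1 else 0 :: real)"
proof -
  have lt: "fst (ed e) < snd (ed e)" using assms(1,2) unfolding edge_graph_def by blast
  from assms(4) have "ed e = (a, b) \<or> ed e = (b, a)" unfolding joins_def .
  thus ?thesis
  proof
    assume "ed e = (a, b)"
    thus ?thesis unfolding incidence_mat_index[OF assms(2,3)] using lt by simp
  next
    assume "ed e = (b, a)"
    thus ?thesis unfolding incidence_mat_index[OF assms(2,3)] using lt by simp
  qed
qed

lemma sum_lessThan_rotate: "(\<Sum>k<n. f ((k + 1) mod n)) = (\<Sum>k<n::nat. f k)"
proof (cases n)
  case (Suc n')
  have "(\<Sum>k<Suc n'. f ((k + 1) mod Suc n')) = (\<Sum>k<n'. f (Suc k)) + f 0"
    by (simp add: sum.cong[OF refl, of _ "\<lambda>k. f ((k + 1) mod Suc n')" "\<lambda>k. f (Suc k)"])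
  also have "\<dots> = (\<Sum>k<Suc n'. f k)" unfolding sum.lessThan_Suc_shift by (rule add.commute)
  finally show ?thesis using Suc by simp
qed simp

text \<open>The signed indicator vector of a cycle is a nontrivial dependency of the incidence rows.\<close>
lemma incidence_rows_dependent_if_cycle:
  assumes G: "edge_graph nv ne ed" and S: "S \<subseteq> {1..ne}" and "has_cycle ed S"
  shows "\<exists>\<sigma>. (\<exists>e\<in>S. \<sigma> e \<noteq> 0)
           \<and> (\<forall>v\<in>{1..nv}. (\<Sum>e\<in>S. incidence_mat nv ne ed $$ (e - 1, v - 1) * \<sigma> e) = 0)"
proof -
  let ?B = "incidence_mat nv ne ed"
  obtain es vs where cy: "es \<noteq> []" "length vs = length es" "distinct es" "set es \<subseteq> S"
    "\<forall>k<length es. joins ed (es ! k) (vs ! k) (vs ! ((k + 1) mod length es))"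
    using assms(3) unfolding has_cycle_def by blast
  define L where "L = length es"
  define s where "s k = (if fst (ed (es ! k)) = vs ! k then 1 else - 1 :: real)" for k
  define \<sigma> where "\<sigma> e = (\<Sum>k<L. if es ! k = e then s k else 0)" for e
  have es: "es ! k \<in> S" "es ! k \<in> {1..ne}" if "k < L" for k
  proof -
    show "es ! k \<in> S" using nth_mem[of k es] that cy(4) unfolding L_def by blast
    thus "es ! k \<in> {1..ne}" using S by blast
  qed
  have "(\<Sum>e\<in>S. ?B $$ (e - 1, v - 1) * \<sigma> e) = 0" if v: "v \<in> {1..nv}" for v
  proof -
    have "(\<Sum>e\<in>S. ?B $$ (e - 1, v - 1) * \<sigma> e)
        = (\<Sum>k<L. \<Sum>e\<in>S. if es ! k = e then s k * ?B $$ (e - 1, v - 1) else 0)"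
      unfolding \<sigma>_def sum_distrib_left
      by (subst sum.swap) (simp add: if_distrib mult.commute cong: if_cong)
    also have "\<dots> = (\<Sum>k<L. s k * ?B $$ (es ! k - 1, v - 1))"
      using es(1) finite_subset[OF S finite_atLeastAtMost] by (simp add: sum.delta')
    also have "\<dots> = (\<Sum>k<L. (if v = vs ! k then 1 else 0) - (if v = vs ! ((k + 1) mod L) then 1 else 0))"
    proof (rule sum.cong[OF refl])
      fix k assume "k \<in> {..<L}"
      hence k: "k < L" by simp
      hence "joins ed (es ! k) (vs ! k) (vs ! ((k + 1) mod L))" using cy(5) unfolding L_def by blast
      thus "s k * ?B $$ (es ! k - 1, v - 1)
          = (if v = vs ! k then 1 else 0) - (if v = vs ! ((k + 1) mod L) then 1 else 0)"
        unfolding s_def by (rule oriented_incidence_row[OF G es(2)[OF k] v])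
    qed
    also have "\<dots> = 0"
      by (simp only: sum_subtractf sum_lessThan_rotate[of "\<lambda>k. if v = vs ! k then 1 else 0"])
    finally show ?thesis .
  qed
  moreover have "\<sigma> (es ! 0) \<noteq> 0"
  proof -
    have "0 < L" using cy(1) unfolding L_def by simp
    have "\<sigma> (es ! 0) = (\<Sum>k<L. if k = 0 then s k else 0)"
      unfolding \<sigma>_def using cy(3) \<open>0 < L\<close> unfolding L_def
      by (intro sum.cong) (auto simp: nth_eq_iff_index_eq)
    also have "\<dots> = s 0" using \<open>0 < L\<close> by simp
    finally show ?thesis unfolding s_def by simp
  qed
  moreover have "es ! 0 \<in> S" using es(1) cy(1) unfolding L_def by simp
  ultimately show ?thesis by blast
qed

definition other_end :: "(nat \<Rightarrow> nat \<times> nat) \<Rightarrow> nat \<Rightarrow> nat \<Rightarrow> nat" where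
  "other_end ed e v = (if fst (ed e) = v then snd (ed e) else fst (ed e))"

lemma joins_other_end:
  assumes "v = fst (ed e) \<or> v = snd (ed e)" "fst (ed e) \<noteq> snd (ed e)"
  shows "joins ed e v (other_end ed e v)" "other_end ed e v \<noteq> v"
  using assms by (auto simp: joins_def other_end_def prod_eq_iff)

lemma joins_same_edge:
  "joins ed e a b \<Longrightarrow> joins ed e c d \<Longrightarrow> (a = c \<and> b = d) \<or> (a = d \<and> b = c)"
  unfolding joins_def by auto

lemma joins_touches:
  assumes "joins ed d a b"
  shows "touches ed d K \<longleftrightarrow> a \<in> K \<or> b \<in> K"
    and "fst (ed d) \<in> K \<and> snd (ed d) \<in> K \<longleftrightarrow> a \<in> K \<and> b \<in> K"
  using assms unfolding joins_def touches_def by auto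

section \<open>Rooted forests with dimers\<close>

lemma funpow_periodic_after_card:
  assumes "finite S" "f ` S \<subseteq> S" "x \<in> S" "card S \<le> n"
  shows "\<exists>P>0. (f ^^ P) ((f ^^ n) x) = (f ^^ n) x"
proof -
  let ?h = "\<lambda>k. (f ^^ k) x"
  have "?h k \<in> S" for k using assms(2,3) by (induction k) auto
  hence "card (?h ` {0..card S}) \<le> card S" using assms(1) by (intro card_mono) auto
  hence "\<not> inj_on ?h {0..card S}" by (intro pigeonhole) simp
  then obtain a b where ab: "a < b" "b \<le> card S" "?h a = ?h b"
    unfolding inj_on_def by (metis atLeastAtMost_iff linorder_neqE_nat)
  have "(f ^^ (b - a)) (?h a) = (f ^^ (b - a + a)) x" by (simp add: funpow_add)
  also have "\<dots> = ?h a" using ab by simp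
  finally have "(f ^^ (b - a)) (?h a) = ?h a" .
  hence "(f ^^ (b - a)) ((f ^^ (n - a)) (?h a)) = (f ^^ (n - a)) (?h a)"
    by (metis comp_apply funpow_add add.commute)
  moreover have "(f ^^ (n - a)) (?h a) = (f ^^ (n - a + a)) x" by (simp add: funpow_add)
  hence "(f ^^ (n - a)) (?h a) = (f ^^ n) x" using ab(1,2) assms(4) by simp
  ultimately show ?thesis using ab(1) by (intro exI[of _ "b - a"]) simp
qed

lemma periodic_point_iterates_not_fixed:
  assumes "(f ^^ P) y = y" "0 < P" "f y \<noteq> y"
  shows "f ((f ^^ k) y) \<noteq> (f ^^ k) y"
proof
  let ?z = "(f ^^ k) y"
  assume "f ?z = ?z"
  hence fixed: "(f ^^ j) ?z = ?z" for j by (induction j) simp_all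
  have periodic: "(f ^^ (P * Suc k)) y = y"
    using funpow_mod_eq[where m = "P * Suc k", OF assms(1)] by simp
  have "k \<le> P * Suc k" using assms(2) by (cases P) auto
  hence "y = (f ^^ (P * Suc k - k + k)) y" using periodic by simp
  also have "\<dots> = (f ^^ (P * Suc k - k)) ?z" by (simp only: funpow_add comp_apply)
  also have "\<dots> = ?z" by (rule fixed)
  finally have "y = ?z" .
  thus False using \<open>f ?z = ?z\<close> assms(3) by simp
qed

locale rooted_edge_set =
  fixes nv ne :: nat and ed :: "nat \<Rightarrow> nat \<times> nat" and rho :: nat and C :: "nat set"
  assumes edge_graph: "edge_graph nv ne ed" and rho: "rho \<in> {1..nv}" and C: "C \<subseteq> {1..ne}"
begin

lemma finite_C: "finite C"
  using C finite_subset by blast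

lemma edge_ends:
  "e \<in> C \<Longrightarrow> fst (ed e) \<in> {1..nv} \<and> snd (ed e) \<in> {1..nv} \<and> fst (ed e) \<noteq> snd (ed e)"
  using edge_graph C unfolding edge_graph_def by fastforce

lemma edge_unique:
  assumes "d \<in> {1..ne}" "d' \<in> {1..ne}" "joins ed d a b" "joins ed d' a b"
  shows "d = d'"
proof -
  have "fst (ed d) < snd (ed d)" "fst (ed d') < snd (ed d')"
    using edge_graph assms(1,2) unfolding edge_graph_def by auto
  hence "ed d = ed d'" using assms(3,4) unfolding joins_def by auto
  thus ?thesis using edge_graph assms(1,2) unfolding edge_graph_def by (auto dest: inj_onD)
qed

end

text \<open>The data read off a perfect matching of the block matrix. Orienting every edge of \<open>C\<close> away
  from its child end makes \<open>C\<close> a forest whose trees are rooted at \<open>rho\<close> or at a node covered by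
  a dimer \<open>{v, mate v}\<close>.\<close>
locale matched_forest = rooted_edge_set +
  fixes child :: "nat \<Rightarrow> nat" and mate :: "nat \<Rightarrow> nat"
  assumes acyclic: "\<not> has_cycle ed C"
    and child_end: "e \<in> C \<Longrightarrow> child e = fst (ed e) \<or> child e = snd (ed e)"
    and child_not_root: "e \<in> C \<Longrightarrow> child e \<noteq> rho"
    and inj_child: "inj_on child C"
    and mate: "perfect_matching_on ({1..nv} - insert rho (child ` C)) mate"
    and mate_adjacent:
      "v \<in> {1..nv} - insert rho (child ` C) \<Longrightarrow> \<exists>e\<in>{1..ne}. joins ed e v (mate v)"
begin

abbreviation "free \<equiv> {1..nv} - insert rho (child ` C)"

definition parent_edge :: "nat \<Rightarrow> nat" where
  "parent_edge v = the_inv_into C child v"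

definition parent :: "nat \<Rightarrow> nat" where
  "parent v = (if v \<in> child ` C then other_end ed (parent_edge v) v else v)"

definition root :: "nat \<Rightarrow> nat" where
  "root v = (parent ^^ nv) v"

definition dimers :: "nat set" where
  "dimers = {e \<in> {1..ne}. \<exists>v\<in>free. joins ed e v (mate v)}"

lemma parent_edge: "v \<in> child ` C \<Longrightarrow> parent_edge v \<in> C \<and> child (parent_edge v) = v"
  unfolding parent_edge_def using inj_child by (simp add: the_inv_into_into f_the_inv_into_f)

lemma parent_edge_child: "e \<in> C \<Longrightarrow> parent_edge (child e) = e"
  unfolding parent_edge_def using inj_child by (rule the_inv_into_f_f)

lemma joins_child: "e \<in> C \<Longrightarrow> joins ed e (child e) (other_end ed e (child e))"
  using joins_other_end(1)[of "child e" ed e] child_end edge_ends by blast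

lemma joins_parent:
  assumes "v \<in> child ` C"
  shows "joins ed (parent_edge v) v (parent v)" "parent v \<noteq> v"
proof -
  have e: "parent_edge v \<in> C" "child (parent_edge v) = v" using parent_edge[OF assms] by auto
  have "v = fst (ed (parent_edge v)) \<or> v = snd (ed (parent_edge v))"
    using child_end[OF e(1)] e(2) by simp
  from joins_other_end[of v ed "parent_edge v", OF this] edge_ends[OF e(1)]
  show "joins ed (parent_edge v) v (parent v)" "parent v \<noteq> v"
    using assms unfolding parent_def by auto
qed

lemma parent_fixed_iff: "parent v = v \<longleftrightarrow> v \<notin> child ` C"
  using joins_parent(2) unfolding parent_def by auto

lemma parent_node: "v \<in> {1..nv} \<Longrightarrow> parent v \<in> {1..nv}"
  using edge_ends parent_edge unfolding parent_def other_end_def by auto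

lemma funpow_parent_node: "v \<in> {1..nv} \<Longrightarrow> (parent ^^ k) v \<in> {1..nv}"
proof (induction k)
  case (Suc k)
  thus ?case using parent_node[OF Suc.IH[OF Suc.prems]] by simp
qed simp

lemma reachable_funpow_parent: "(v, (parent ^^ k) v) \<in> (adj_rel ed C)\<^sup>*"
proof (induction k)
  case (Suc k)
  let ?x = "(parent ^^ k) v"
  have "(?x, parent ?x) \<in> (adj_rel ed C)\<^sup>="
  proof (cases "?x \<in> child ` C")
    case True
    thus ?thesis using joins_parent(1)[OF True] parent_edge[OF True] unfolding adj_rel_def by blast
  qed (simp add: parent_def)
  thus ?case using Suc.IH by (auto intro: rtrancl_into_rtrancl)
qed simp

text \<open>Along a periodic orbit of \<open>parent\<close> that is not a fixed point, the edges to the parents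
  are distinct and close up.\<close>
lemma cycle_if_periodic_parent:
  assumes "(parent ^^ P) w = w" "0 < P" "parent w \<noteq> w"
  shows "has_cycle ed C"
proof -
  have child: "(parent ^^ k) w \<in> child ` C" for k
    using periodic_point_iterates_not_fixed[OF assms] parent_fixed_iff by blast
  have "w = (parent ^^ P) w \<and> 0 < P" using assms(1,2) by simp
  hence "w \<in> orbit parent w" unfolding orbit_altdef by blast
  define L where "L = funpow_dist1 parent w w"
  have L: "(parent ^^ L) w = w" "0 < L"
    using funpow_dist1_prop[OF \<open>w \<in> orbit parent w\<close>] unfolding L_def by auto
  have inj: "inj_on (\<lambda>k. (parent ^^ k) w) {0..<L}"
    using inj_on_funpow_dist1[OF \<open>w \<in> orbit parent w\<close>] unfolding L_def .
  have inj_edges: "inj_on (\<lambda>k. parent_edge ((parent ^^ k) w)) {0..<L}"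
  proof (rule inj_onI)
    fix i j assume ij: "i \<in> {0..<L}" "j \<in> {0..<L}"
      and eq: "parent_edge ((parent ^^ i) w) = parent_edge ((parent ^^ j) w)"
    have "(parent ^^ i) w = (parent ^^ j) w"
      using parent_edge[OF child[of i]] parent_edge[OF child[of j]] eq by metis
    thus "i = j" using inj_onD[OF inj] ij by blast
  qed
  define vs where "vs = map (\<lambda>k. (parent ^^ k) w) [0..<L]"
  define es where "es = map (\<lambda>k. parent_edge ((parent ^^ k) w)) [0..<L]"
  show "has_cycle ed C" unfolding has_cycle_def
  proof (intro exI conjI allI impI)
    show "es \<noteq> []" "length vs = length es" unfolding es_def vs_def using L(2) by simp_all
    show "distinct es" "distinct vs"
      unfolding es_def vs_def using inj inj_edges by (simp_all add: distinct_map)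
    show "set es \<subseteq> C" unfolding es_def using parent_edge[OF child] by auto
    fix k assume "k < length es"
    hence k: "k < L" unfolding es_def by simp
    have "vs ! ((k + 1) mod length es) = (parent ^^ ((k + 1) mod L)) w"
      unfolding vs_def es_def using L(2) by simp
    also have "\<dots> = parent ((parent ^^ k) w)" using funpow_mod_eq[OF L(1)] by simp
    finally show "joins ed (es ! k) (vs ! k) (vs ! ((k + 1) mod length es))"
      unfolding es_def vs_def using joins_parent(1)[OF child] k by simp
  qed
qed

lemma parent_root:
  assumes "v \<in> {1..nv}"
  shows "parent (root v) = root v"
proof (rule ccontr)
  assume "parent (root v) \<noteq> root v"
  moreover have "parent ` {1..nv} \<subseteq> {1..nv}" using parent_node by blast
  then obtain P where "0 < P" "(parent ^^ P) (root v) = root v"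
    using funpow_periodic_after_card[of "{1..nv}" parent v nv] assms unfolding root_def by auto
  ultimately show False using cycle_if_periodic_parent acyclic by blast
qed

lemma root_parent: "v \<in> {1..nv} \<Longrightarrow> root (parent v) = root v"
  using parent_root unfolding root_def by (simp add: funpow_swap1)

lemma root_fixed:
  assumes "v \<notin> child ` C"
  shows "root v = v"
proof -
  have "(parent ^^ k) v = v" for k
    using assms parent_fixed_iff by (induction k) simp_all
  thus ?thesis unfolding root_def .
qed

lemma root_eq_if_adjacent:
  assumes "(u, v) \<in> adj_rel ed C"
  shows "root u = root v"
proof -
  obtain e where e: "e \<in> C" "joins ed e u v" using assms unfolding adj_rel_def by blast
  let ?c = "child e"
  have c: "?c \<in> child ` C" "parent_edge ?c = e" using e(1) parent_edge_child by auto
  have "?c \<in> {1..nv}" using child_end[OF e(1)] edge_ends[OF e(1)] by auto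
  hence "root (parent ?c) = root ?c" by (rule root_parent)
  moreover have "joins ed e ?c (parent ?c)" using joins_parent(1)[OF c(1)] c(2) by simp
  hence "u = ?c \<and> v = parent ?c \<or> u = parent ?c \<and> v = ?c" by (rule joins_same_edge[OF e(2)])
  ultimately show ?thesis by auto
qed

lemma root_eq_if_reachable: "(u, v) \<in> (adj_rel ed C)\<^sup>* \<Longrightarrow> root u = root v"
  by (induction rule: rtrancl_induct) (simp_all add: root_eq_if_adjacent)

lemma component_root:
  assumes "K \<in> components nv ed C"
  obtains s where "s \<in> K" "s \<notin> child ` C" "\<And>w. w \<in> K \<Longrightarrow> w \<notin> child ` C \<Longrightarrow> w = s"
proof -
  obtain u where u: "u \<in> {1..nv}" "K = {v \<in> {1..nv}. (u, v) \<in> (adj_rel ed C)\<^sup>*}"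
    using assms unfolding components_def by blast
  show ?thesis
  proof (rule that[of "root u"])
    show "root u \<in> K"
      unfolding u(2) root_def using funpow_parent_node[OF u(1)] reachable_funpow_parent by simp
    show "root u \<notin> child ` C" using parent_root[OF u(1)] parent_fixed_iff by simp
    show "w = root u" if "w \<in> K" "w \<notin> child ` C" for w
      using root_fixed[OF that(2)] root_eq_if_reachable[of u w] that(1) unfolding u(2) by simp
  qed
qed

lemma mate_free:
  assumes "v \<in> free"
  shows "mate v \<in> free" "mate v \<noteq> v" "mate (mate v) = v"
  using mate assms unfolding perfect_matching_on_def by auto

lemma dimers_disjoint: "dimers \<inter> C = {}"
proof (rule ccontr)
  assume "dimers \<inter> C \<noteq> {}"
  then obtain e v where e: "e \<in> C" "v \<in> free" "joins ed e v (mate v)" unfolding dimers_def by blast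
  have "child e = v \<or> child e = mate v" using joins_same_edge[OF e(3) joins_child[OF e(1)]] by metis
  moreover have "child e \<in> child ` C" using e(1) by blast
  ultimately show False using e(2) mate_free(1)[OF e(2)] by auto
qed

lemma dimers_in_root_component:
  assumes "K \<in> components nv ed C" "rho \<in> K" "d \<in> dimers"
  shows "\<not> touches ed d K"
proof -
  obtain s where s: "s \<in> K" "\<And>w. w \<in> K \<Longrightarrow> w \<notin> child ` C \<Longrightarrow> w = s"
    using component_root[OF assms(1)] by blast
  have "rho \<notin> child ` C" using child_not_root by auto
  hence "s = rho" using s(2)[OF assms(2)] by simp
  have free_K: "w \<notin> K" if "w \<in> free" for w
  proof
    assume "w \<in> K"
    moreover have "w \<notin> child ` C" "w \<noteq> rho" using that by auto
    ultimately show False using s(2) \<open>s = rho\<close> by blast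
  qed
  obtain v where v: "v \<in> free" "joins ed d v (mate v)" using assms(3) unfolding dimers_def by blast
  thus ?thesis using joins_touches(1)[OF v(2)] free_K[OF v(1)] free_K[OF mate_free(1)[OF v(1)]] by simp
qed

lemma dimer_of_other_component:
  assumes "K \<in> components nv ed C" "rho \<notin> K"
  shows "\<exists>!d. d \<in> dimers \<and> touches ed d K"
    and "d \<in> dimers \<Longrightarrow> touches ed d K \<Longrightarrow> \<not> (fst (ed d) \<in> K \<and> snd (ed d) \<in> K)"
proof -
  obtain s where s: "s \<in> K" "s \<notin> child ` C" "\<And>w. w \<in> K \<Longrightarrow> w \<notin> child ` C \<Longrightarrow> w = s"
    using component_root[OF assms(1)] by blast
  have "K \<subseteq> {1..nv}" using assms(1) unfolding components_def by auto
  hence "s \<in> free" using s(1,2) assms(2) by auto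
  have free_K: "w = s" if "w \<in> free" "w \<in> K" for w using s(3) that by blast
  have mate_s: "mate s \<notin> K" using free_K[OF mate_free(1)] mate_free(2) \<open>s \<in> free\<close> by blast
  have joins_s: "joins ed d s (mate s)" if "d \<in> dimers" "touches ed d K" for d
  proof -
    obtain v where v: "v \<in> free" "joins ed d v (mate v)" using \<open>d \<in> dimers\<close> unfolding dimers_def by blast
    have "v \<in> K \<or> mate v \<in> K" using joins_touches(1)[OF v(2)] that(2) by simp
    hence "v = s \<or> mate v = s" using free_K v(1) mate_free(1)[OF v(1)] by blast
    thus ?thesis using v mate_free(3)[OF v(1)] by (auto simp: joins_def)
  qed
  obtain e where e: "e \<in> {1..ne}" "joins ed e s (mate s)" using mate_adjacent \<open>s \<in> free\<close> by blast
  show "\<exists>!d. d \<in> dimers \<and> touches ed d K"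
  proof (rule ex1I[of _ e])
    show "e \<in> dimers \<and> touches ed e K"
      using e \<open>s \<in> free\<close> joins_touches(1)[OF e(2)] s(1) unfolding dimers_def by blast
    show "d = e" if "d \<in> dimers \<and> touches ed d K" for d
      using edge_unique[OF _ e(1) joins_s e(2)] that unfolding dimers_def by blast
  qed
  show "d \<in> dimers \<Longrightarrow> touches ed d K \<Longrightarrow> \<not> (fst (ed d) \<in> K \<and> snd (ed d) \<in> K)"
    using joins_touches(2)[OF joins_s] mate_s by simp
qed

theorem dimer_cover:
  "\<exists>D. D \<subseteq> {1..ne} \<and> D \<inter> C = {} \<and>
     (\<forall>K\<in>components nv ed C.
        (rho \<in> K \<and> (\<forall>d\<in>D. \<not> touches ed d K))
      \<or> (rho \<notin> K \<and> (\<exists>!d. d \<in> D \<and> touches ed d K)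
           \<and> (\<forall>d\<in>D. touches ed d K \<longrightarrow> \<not> (fst (ed d) \<in> K \<and> snd (ed d) \<in> K))))"
proof (intro exI[of _ dimers] conjI ballI)
  show "dimers \<subseteq> {1..ne}" unfolding dimers_def by blast
  show "dimers \<inter> C = {}" by (rule dimers_disjoint)
  fix K assume K: "K \<in> components nv ed C"
  show "(rho \<in> K \<and> (\<forall>d\<in>dimers. \<not> touches ed d K))
      \<or> (rho \<notin> K \<and> (\<exists>!d. d \<in> dimers \<and> touches ed d K)
           \<and> (\<forall>d\<in>dimers. touches ed d K \<longrightarrow> \<not> (fst (ed d) \<in> K \<and> snd (ed d) \<in> K)))"
  proof (cases "rho \<in> K")
    case True
    thus ?thesis using dimers_in_root_component[OF K True] by blast
  next
    case False
    thus ?thesis using dimer_of_other_component[OF K False] by blast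
  qed
qed

end

section \<open>The block matrix\<close>

lemma pick_less_pick_iff:
  assumes "i < card S" "j < card S"
  shows "pick S i < pick S j \<longleftrightarrow> i < j"
  using assms pick_mono_le[of i S j] pick_mono_le[of j S i] by (cases i j rule: linorder_cases) auto

lemma bij_betw_pick:
  assumes "finite S"
  shows "bij_betw (pick S) {..<card S} S"
proof -
  have inj: "inj_on (pick S) {..<card S}"
    by (rule inj_onI) (use pick_less_pick_iff in \<open>metis lessThan_iff less_irrefl nat_neq_iff\<close>)
  moreover have sub: "pick S ` {..<card S} \<subseteq> S" using pick_in_set_le by auto
  moreover have "card (pick S ` {..<card S}) = card S" using card_image[OF inj] by simp
  ultimately show ?thesis unfolding bij_betw_def using card_subset_eq[OF assms sub] by simp
qed

lemma bij_betw_Suc_pick_pred: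
  assumes "finite S" "0 \<notin> S"
  shows "bij_betw (\<lambda>i. Suc (pick ((\<lambda>x. x - 1) ` S) i)) {..<card S} S"
proof -
  let ?T = "(\<lambda>x. x - 1) ` S"
  have inj: "inj_on (\<lambda>x. x - 1) S"
  proof (rule inj_onI)
    fix x y assume "x \<in> S" "y \<in> S" "x - 1 = y - 1"
    thus "x = y" using assms(2) by (cases x; cases y) auto
  qed
  have pick: "bij_betw (pick ?T) {..<card S} ?T"
    using bij_betw_pick[of ?T] assms(1) card_image[OF inj] by simp
  have "Suc (x - 1) = x" if "x \<in> S" for x using that assms(2) by (cases x) auto
  hence suc: "bij_betw Suc ?T S" by (intro bij_betw_imageI) (simp_all add: image_image)
  show ?thesis using bij_betw_trans[OF pick suc] by (simp add: comp_def)
qed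

lemma skew_carrier: "A \<in> carrier_mat n n \<Longrightarrow> skew A \<in> carrier_mat n n"
  unfolding skew_def triu_def by auto

lemma skew_index:
  assumes "A \<in> carrier_mat n n" "k < n" "l < n"
  shows "skew A $$ (k, l) = (if k \<le> l then A $$ (k, l) else 0) - (if l \<le> k then A $$ (l, k) else 0)"
  using assms unfolding skew_def triu_def by auto

text \<open>Rows and columns of the block matrix are labelled by \<open>Inl e\<close> for an edge \<open>e \<in> C\<close> and
  by \<open>Inr v\<close> for a node \<open>v \<noteq> rho\<close>; this is the entry at a pair of labels.\<close>
fun block_label_entry ::
  "nat \<Rightarrow> nat \<Rightarrow> (nat \<Rightarrow> nat \<times> nat) \<Rightarrow> nat + nat \<Rightarrow> nat + nat \<Rightarrow> real" where
  "block_label_entry nv ne ed (Inl e) (Inr v) = incidence_mat nv ne ed $$ (e - 1, v - 1)"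
| "block_label_entry nv ne ed (Inr v) (Inl e) = - incidence_mat nv ne ed $$ (e - 1, v - 1)"
| "block_label_entry nv ne ed (Inr u) (Inr v) =
     (if u < v then laplacian_mat nv ne ed $$ (u - 1, v - 1)
      else if v < u then - laplacian_mat nv ne ed $$ (v - 1, u - 1) else 0)"
| "block_label_entry nv ne ed (Inl e) (Inl e') = 0"

lemma block_label_entry_antisym:
  "block_label_entry nv ne ed y x = - block_label_entry nv ne ed x y"
  by (cases x; cases y) auto

context rooted_edge_set
begin

abbreviation "M \<equiv> block_mat nv ne ed C rho"
abbreviation "N \<equiv> card C + (nv - 1)"
abbreviation "labels \<equiv> C <+> ({1..nv} - {rho})"

definition edge_at :: "nat \<Rightarrow> nat" where
  "edge_at i = Suc (pick ((\<lambda>e. e - 1) ` C) i)"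

definition node_at :: "nat \<Rightarrow> nat" where
  "node_at j = Suc (pick ({0..<nv} - {rho - 1}) j)"

definition label :: "nat \<Rightarrow> nat + nat" where
  "label i = (if i < card C then Inl (edge_at i) else Inr (node_at (i - card C)))"

lemma bij_edge_at: "bij_betw edge_at {..<card C} C"
  unfolding edge_at_def using bij_betw_Suc_pick_pred[OF finite_C] C by force

lemma image_pred_nodes: "(\<lambda>x. x - 1) ` ({1..nv} - {rho}) = {0..<nv} - {rho - 1}"
proof
  show "(\<lambda>x. x - 1) ` ({1..nv} - {rho}) \<subseteq> {0..<nv} - {rho - 1}" using rho by auto
  show "{0..<nv} - {rho - 1} \<subseteq> (\<lambda>x. x - 1) ` ({1..nv} - {rho})"
  proof
    fix y assume "y \<in> {0..<nv} - {rho - 1}"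
    hence "Suc y \<in> {1..nv} - {rho}" "y = Suc y - 1" using rho by auto
    thus "y \<in> (\<lambda>x. x - 1) ` ({1..nv} - {rho})" by blast
  qed
qed

lemma card_pred_nodes: "card ({0..<nv} - {rho - 1}) = nv - 1"
proof -
  have "rho - 1 \<in> {0..<nv}" using rho by auto
  thus ?thesis by (simp add: card_Diff_singleton)
qed

lemma bij_node_at: "bij_betw node_at {..<nv - 1} ({1..nv} - {rho})"
proof -
  have "card ({1..nv} - {rho}) = nv - 1" using rho by simp
  thus ?thesis unfolding node_at_def
    using bij_betw_Suc_pick_pred[of "{1..nv} - {rho}"] image_pred_nodes by simp
qed

lemma node_at_less_iff: "j < nv - 1 \<Longrightarrow> k < nv - 1 \<Longrightarrow> node_at j < node_at k \<longleftrightarrow> j < k"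
  unfolding node_at_def using pick_less_pick_iff card_pred_nodes by simp

lemma inj_on_label: "inj_on label {..<N}"
proof (rule inj_onI)
  fix i j assume ij: "i \<in> {..<N}" "j \<in> {..<N}" and eq: "label i = label j"
  show "i = j"
  proof (cases "i < card C"; cases "j < card C")
    assume "i < card C" "j < card C"
    thus "i = j" using eq inj_onD[OF bij_betw_imp_inj_on[OF bij_edge_at]] by (simp add: label_def)
  next
    assume "\<not> i < card C" "\<not> j < card C"
    hence "node_at (i - card C) = node_at (j - card C)" "i - card C < nv - 1" "j - card C < nv - 1"
      using eq ij by (auto simp: label_def)
    hence "i - card C = j - card C" using inj_onD[OF bij_betw_imp_inj_on[OF bij_node_at]] by simp
    thus "i = j" using \<open>\<not> i < card C\<close> \<open>\<not> j < card C\<close> by simp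
  qed (use eq in \<open>simp_all add: label_def\<close>)
qed

lemma image_label: "label ` {..<N} = labels"
proof
  show "label ` {..<N} \<subseteq> labels"
  proof
    fix x assume "x \<in> label ` {..<N}"
    then obtain i where i: "i < N" "x = label i" by auto
    show "x \<in> labels"
    proof (cases "i < card C")
      case True
      hence "edge_at i \<in> C" by (intro bij_betw_apply[OF bij_edge_at]) simp
      thus ?thesis using i True by (auto simp: label_def)
    next
      case False
      hence "i - card C \<in> {..<nv - 1}" using i by auto
      hence "node_at (i - card C) \<in> {1..nv} - {rho}" by (rule bij_betw_apply[OF bij_node_at])
      thus ?thesis using i False by (auto simp: label_def)
    qed
  qed
  show "labels \<subseteq> label ` {..<N}"
  proof
    fix x assume "x \<in> labels"
    thus "x \<in> label ` {..<N}"
    proof (cases x)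
      case (Inl e)
      hence "e \<in> edge_at ` {..<card C}"
        using \<open>x \<in> labels\<close> bij_betw_imp_surj_on[OF bij_edge_at] by auto
      then obtain i where "i < card C" "e = edge_at i" by auto
      thus ?thesis using Inl by (auto simp: label_def image_iff intro!: bexI[of _ i])
    next
      case (Inr v)
      hence "v \<in> node_at ` {..<nv - 1}"
        using \<open>x \<in> labels\<close> bij_betw_imp_surj_on[OF bij_node_at] by auto
      then obtain j where "j < nv - 1" "v = node_at j" by auto
      thus ?thesis using Inr by (auto simp: label_def image_iff intro!: bexI[of _ "card C + j"])
    qed
  qed
qed

lemma bij_label: "bij_betw label {..<N} labels"
  using inj_on_label image_label by (rule bij_betw_imageI)

lemma label_inv_into:
  assumes "x \<in> labels"
  shows "inv_into {..<N} label x < N" "label (inv_into {..<N} label x) = x"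
  using assms bij_betw_inv_into_right[OF bij_label] inv_into_into[of x label "{..<N}"] image_label
  by auto

lemma card_labels: "card labels = N"
  using bij_betw_same_card[OF bij_label] by simp

lemma sum_labels:
  "(\<Sum>i<N. f (label i)) = (\<Sum>e\<in>C. f (Inl e)) + (\<Sum>v\<in>{1..nv} - {rho}. f (Inr v))"
proof -
  have "(\<Sum>i<N. f (label i)) = sum f labels" by (rule sum.reindex_bij_betw[OF bij_label])
  also have "\<dots> = sum f (Inl ` C) + sum f (Inr ` ({1..nv} - {rho}))"
    unfolding Plus_def using finite_C by (intro sum.union_disjoint) auto
  also have "\<dots> = (\<Sum>e\<in>C. f (Inl e)) + (\<Sum>v\<in>{1..nv} - {rho}. f (Inr v))"
    by (simp add: sum.reindex)
  finally show ?thesis .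
qed

lemma B_C_rho_dim: "B_C_rho nv ne ed C rho \<in> carrier_mat (card C) (nv - 1)"
  and B_C_rho_index: "i < card C \<Longrightarrow> j < nv - 1 \<Longrightarrow>
    B_C_rho nv ne ed C rho $$ (i, j) = incidence_mat nv ne ed $$ (edge_at i - 1, node_at j - 1)"
proof -
  let ?I = "(\<lambda>e. e - 1) ` C" and ?J = "{0..<nv} - {rho - 1}"
  have I: "{i. i < ne \<and> i \<in> ?I} = ?I" using C by force
  have J: "{j. j < nv \<and> j \<in> ?J} = ?J" by auto
  have "inj_on (\<lambda>e. e - 1) C"
  proof (rule inj_onI)
    fix x y assume "x \<in> C" "y \<in> C" "x - 1 = y - 1"
    moreover have "1 \<le> x" "1 \<le> y" using C \<open>x \<in> C\<close> \<open>y \<in> C\<close> by auto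
    ultimately show "x = y" by linarith
  qed
  hence "card ?I = card C" by (rule card_image)
  thus "B_C_rho nv ne ed C rho \<in> carrier_mat (card C) (nv - 1)"
    unfolding B_C_rho_def carrier_mat_def mem_Collect_eq dim_submatrix incidence_mat_dim I J
      card_pred_nodes by simp
  show "i < card C \<Longrightarrow> j < nv - 1 \<Longrightarrow>
    B_C_rho nv ne ed C rho $$ (i, j) = incidence_mat nv ne ed $$ (edge_at i - 1, node_at j - 1)"
    unfolding B_C_rho_def edge_at_def node_at_def using \<open>card ?I = card C\<close>
    by (subst submatrix_index) (simp_all only: incidence_mat_dim I J card_pred_nodes diff_Suc_1)
qed

lemma L_rho_rho_dim: "L_rho_rho nv ne ed rho \<in> carrier_mat (nv - 1) (nv - 1)"
  and L_rho_rho_index: "k < nv - 1 \<Longrightarrow> l < nv - 1 \<Longrightarrow>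
    L_rho_rho nv ne ed rho $$ (k, l) = laplacian_mat nv ne ed $$ (node_at k - 1, node_at l - 1)"
proof -
  have J: "{j. j < nv \<and> j \<in> {0..<nv} - {rho - 1}} = {0..<nv} - {rho - 1}" by auto
  show "L_rho_rho nv ne ed rho \<in> carrier_mat (nv - 1) (nv - 1)"
    unfolding L_rho_rho_def carrier_mat_def mem_Collect_eq dim_submatrix laplacian_mat_dim J
      card_pred_nodes by simp
  show "k < nv - 1 \<Longrightarrow> l < nv - 1 \<Longrightarrow>
    L_rho_rho nv ne ed rho $$ (k, l) = laplacian_mat nv ne ed $$ (node_at k - 1, node_at l - 1)"
    unfolding L_rho_rho_def node_at_def
    by (subst submatrix_index) (simp_all only: laplacian_mat_dim J card_pred_nodes diff_Suc_1)
qed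

lemma block_mat_carrier: "M \<in> carrier_mat N N"
  unfolding block_mat_def
  by (rule four_block_carrier_mat[OF zero_carrier_mat skew_carrier[OF L_rho_rho_dim]])

lemma block_mat_four_block_index:
  assumes "i < N" "j < N"
  shows "M $$ (i, j) = (if i < card C then if j < card C then 0
      else B_C_rho nv ne ed C rho $$ (i, j - card C)
      else if j < card C then - B_C_rho nv ne ed C rho $$ (j, i - card C)
      else skew (L_rho_rho nv ne ed rho) $$ (i - card C, j - card C))"
proof -
  let ?B = "B_C_rho nv ne ed C rho" and ?L = "L_rho_rho nv ne ed rho"
  have dims: "dim_row (0\<^sub>m (card C) (card C) :: real mat) = card C"
    "dim_col (0\<^sub>m (card C) (card C) :: real mat) = card C"
    "dim_row (skew ?L) = nv - 1" "dim_col (skew ?L) = nv - 1"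
    "dim_row ?B = card C" "dim_col ?B = nv - 1"
    using skew_carrier[OF L_rho_rho_dim] B_C_rho_dim by auto
  have "M $$ (i, j) = (if i < card C then if j < card C then 0\<^sub>m (card C) (card C) $$ (i, j)
      else ?B $$ (i, j - card C)
      else if j < card C then (- transpose_mat ?B) $$ (i - card C, j)
      else skew ?L $$ (i - card C, j - card C))"
    unfolding block_mat_def index_mat_four_block(1)[of i "0\<^sub>m (card C) (card C)" "skew ?L" j ?B
        "- transpose_mat ?B", unfolded dims, OF assms] dims ..
  moreover have "\<not> i < card C \<Longrightarrow> i - card C < nv - 1" using assms(1) by linarith
  ultimately show ?thesis using assms dims by auto
qed

lemma block_mat_index:
  assumes "i < N" "j < N"
  shows "M $$ (i, j) = block_label_entry nv ne ed (label i) (label j)"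
proof (cases "i < card C"; cases "j < card C")
  assume "\<not> i < card C" "\<not> j < card C"
  hence k: "i - card C < nv - 1" "j - card C < nv - 1" using assms by auto
  have "label i = Inr (node_at (i - card C))" "label j = Inr (node_at (j - card C))"
    using \<open>\<not> i < card C\<close> \<open>\<not> j < card C\<close> by (simp_all add: label_def)
  thus ?thesis
    unfolding block_mat_four_block_index[OF assms] skew_index[OF L_rho_rho_dim k]
      L_rho_rho_index[OF k] L_rho_rho_index[OF k(2,1)]
    using \<open>\<not> i < card C\<close> \<open>\<not> j < card C\<close> node_at_less_iff[OF k] node_at_less_iff[OF k(2,1)]
    by auto
qed (use assms in \<open>simp_all add: block_mat_four_block_index label_def B_C_rho_index\<close>)

lemma transpose_block_mat: "transpose_mat M = - M"
proof (rule eq_matI)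
  fix i j assume "i < dim_row (- M)" "j < dim_col (- M)"
  hence ij: "i < N" "j < N" using block_mat_carrier by auto
  have "transpose_mat M $$ (i, j) = M $$ (j, i)" using ij block_mat_carrier by simp
  also have "\<dots> = - block_label_entry nv ne ed (label i) (label j)"
    unfolding block_mat_index[OF ij(2,1)] by (rule block_label_entry_antisym)
  also have "\<dots> = (- M) $$ (i, j)" using ij block_mat_carrier block_mat_index[OF ij] by simp
  finally show "transpose_mat M $$ (i, j) = (- M) $$ (i, j)" .
qed (use block_mat_carrier in auto)

lemma block_mat_singular_if_cycle:
  assumes "has_cycle ed C"
  shows "det M = 0"
proof -
  let ?B = "incidence_mat nv ne ed"
  obtain \<sigma> e0 where e0: "e0 \<in> C" "\<sigma> e0 \<noteq> 0"
    and flow: "\<And>v. v \<in> {1..nv} \<Longrightarrow> (\<Sum>e\<in>C. ?B $$ (e - 1, v - 1) * \<sigma> e) = 0"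
    using incidence_rows_dependent_if_cycle[OF edge_graph C assms] by blast
  define x where "x = vec N (\<lambda>i. case label i of Inl e \<Rightarrow> \<sigma> e | Inr v \<Rightarrow> 0)"
  have "M *\<^sub>v x = 0\<^sub>v N"
  proof (rule eq_vecI)
    fix r assume "r < dim_vec (0\<^sub>v N :: real vec)"
    hence r: "r < N" by simp
    let ?g = "\<lambda>y. block_label_entry nv ne ed (label r) y * (case y of Inl e \<Rightarrow> \<sigma> e | Inr v \<Rightarrow> 0)"
    have "(M *\<^sub>v x) $ r = (\<Sum>i<N. ?g (label i))"
      using r block_mat_carrier block_mat_index[OF r]
      by (simp add: x_def scalar_prod_def lessThan_atLeast0)
    also have "\<dots> = (\<Sum>e\<in>C. block_label_entry nv ne ed (label r) (Inl e) * \<sigma> e)"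
      using sum_labels[of ?g] by simp
    also have "\<dots> = 0"
    proof (cases "label r")
      case (Inr v)
      have "label r \<in> labels" using bij_betw_apply[OF bij_label] r by simp
      hence "v \<in> {1..nv}" using Inr by auto
      thus ?thesis using Inr flow by (simp add: sum_negf)
    qed simp
    finally show "(M *\<^sub>v x) $ r = 0\<^sub>v N $ r" using r by simp
  qed (use block_mat_carrier in simp)
  moreover have "x \<noteq> 0\<^sub>v N"
  proof
    assume "x = 0\<^sub>v N"
    have "Inl e0 \<in> labels" using e0(1) by (rule InlI)
    note i = label_inv_into[OF this]
    hence "x $ inv_into {..<N} label (Inl e0) = \<sigma> e0" unfolding x_def by simp
    thus False using \<open>x = 0\<^sub>v N\<close> i(1) e0(2) by simp
  qed
  moreover have "x \<in> carrier_vec N" unfolding x_def by simp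
  ultimately show ?thesis using det_0_iff_vec_prod_zero[OF block_mat_carrier] by blast
qed

lemma block_mat_label_matching:
  assumes "det M \<noteq> 0"
  obtains \<nu> where "perfect_matching_on labels \<nu>"
    "\<And>x. x \<in> labels \<Longrightarrow> block_label_entry nv ne ed x (\<nu> x) \<noteq> 0"
proof -
  obtain m where m: "perfect_matching_on {0..<N} m" "\<And>i. i < N \<Longrightarrow> M $$ (i, m i) \<noteq> 0"
    using skew_det_nonzero_imp_perfect_matching[OF block_mat_carrier transpose_block_mat assms]
    by blast
  let ?\<nu> = "label \<circ> m \<circ> inv_into {..<N} label"
  have "perfect_matching_on labels ?\<nu>"
    using perfect_matching_on_bij_betw[OF bij_label] m(1) by (simp add: atLeast0LessThan)
  moreover have "block_label_entry nv ne ed x (?\<nu> x) \<noteq> 0" if "x \<in> labels" for x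
  proof -
    let ?i = "inv_into {..<N} label x"
    have "m ?i < N" using m(1) label_inv_into[OF that] unfolding perfect_matching_on_def by auto
    hence "block_label_entry nv ne ed x (?\<nu> x) = M $$ (?i, m ?i)"
      using block_mat_index[OF label_inv_into(1)[OF that]] label_inv_into(2)[OF that] by simp
    thus ?thesis using m(2)[OF label_inv_into(1)[OF that]] by simp
  qed
  ultimately show ?thesis by (rule that)
qed

lemma joins_if_node_entry_nonzero:
  assumes "block_label_entry nv ne ed (Inr u) (Inr v) \<noteq> 0" "u \<in> {1..nv}" "v \<in> {1..nv}"
  shows "\<exists>e\<in>{1..ne}. joins ed e u v"
proof (cases "u < v")
  case True
  thus ?thesis using assms joins_if_laplacian_nonzero[of u nv v ne ed] by simp
next
  case False
  hence "v < u" using assms(1) by (cases "v < u") auto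
  thus ?thesis using assms joins_if_laplacian_nonzero[of v nv u ne ed] by (auto simp: joins_def)
qed

context
  fixes \<nu> :: "nat + nat \<Rightarrow> nat + nat"
  assumes matching: "perfect_matching_on labels \<nu>"
    and nonzero: "\<And>x. x \<in> labels \<Longrightarrow> block_label_entry nv ne ed x (\<nu> x) \<noteq> 0"
begin

private lemma matching_labels:
  assumes "x \<in> labels"
  shows "\<nu> x \<in> labels" "\<nu> x \<noteq> x" "\<nu> (\<nu> x) = x"
  using matching assms unfolding perfect_matching_on_def by auto

text \<open>The row of an edge \<open>e \<in> C\<close> has nonzero entries only in the columns of its two ends.\<close>
lemma matched_edge_row:
  assumes "e \<in> C"
  shows "\<nu> (Inl e) = Inr (projr (\<nu> (Inl e)))" "projr (\<nu> (Inl e)) \<in> {1..nv} - {rho}"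
    "projr (\<nu> (Inl e)) = fst (ed e) \<or> projr (\<nu> (Inl e)) = snd (ed e)"
proof -
  have "Inl e \<in> labels" using assms by (rule InlI)
  note x = matching_labels[OF this] nonzero[OF this]
  obtain v where v: "\<nu> (Inl e) = Inr v"
  proof (cases "\<nu> (Inl e)")
    case (Inl e')
    thus ?thesis using x(4) by simp
  qed
  hence "v \<in> {1..nv} - {rho}" using x(1) by auto
  moreover have "incidence_mat nv ne ed $$ (e - 1, v - 1) \<noteq> 0" using x(4) v by simp
  hence "v = fst (ed e) \<or> v = snd (ed e)"
    using incidence_mat_index[of e ne v nv ed] assms C \<open>v \<in> {1..nv} - {rho}\<close>
    by (auto split: if_splits)
  ultimately show "\<nu> (Inl e) = Inr (projr (\<nu> (Inl e)))" "projr (\<nu> (Inl e)) \<in> {1..nv} - {rho}"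
    "projr (\<nu> (Inl e)) = fst (ed e) \<or> projr (\<nu> (Inl e)) = snd (ed e)"
    using v by simp_all
qed

lemma matched_free_row:
  assumes v: "v \<in> {1..nv} - insert rho ((\<lambda>e. projr (\<nu> (Inl e))) ` C)"
  obtains u where "\<nu> (Inr v) = Inr u" "\<nu> (Inr u) = Inr v" "u \<noteq> v"
    "u \<in> {1..nv} - insert rho ((\<lambda>e. projr (\<nu> (Inl e))) ` C)" "\<exists>e\<in>{1..ne}. joins ed e v u"
proof -
  have "Inr v \<in> labels" using v by auto
  note x = matching_labels[OF this] nonzero[OF this]
  have "\<nu> (Inr v) \<noteq> Inl e" for e
  proof
    assume "\<nu> (Inr v) = Inl e"
    hence "e \<in> C" "\<nu> (Inl e) = Inr v" using x(1,3) by auto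
    hence "v \<in> (\<lambda>e. projr (\<nu> (Inl e))) ` C" by (metis image_eqI sum.sel(2))
    thus False using v by blast
  qed
  then obtain u where u: "\<nu> (Inr v) = Inr u" by (cases "\<nu> (Inr v)") auto
  hence "u \<in> {1..nv} - {rho}" using x(1) by auto
  have "u \<noteq> projr (\<nu> (Inl e))" if "e \<in> C" for e
  proof
    assume "u = projr (\<nu> (Inl e))"
    hence "\<nu> (\<nu> (Inl e)) = \<nu> (\<nu> (Inr v))" using matched_edge_row(1)[OF that] u by simp
    thus False using x(3) matching_labels(3)[OF InlI[OF that]] by simp
  qed
  moreover have "u \<noteq> v" "\<nu> (Inr u) = Inr v" using x(2,3) u by auto
  moreover have "\<exists>e\<in>{1..ne}. joins ed e v u"
    using joins_if_node_entry_nonzero[of v u] x(4) u \<open>u \<in> {1..nv} - {rho}\<close> v by auto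
  ultimately show ?thesis using that u \<open>u \<in> {1..nv} - {rho}\<close> by blast
qed

lemma matched_forest_of_label_matching:
  assumes "\<not> has_cycle ed C"
  shows "matched_forest nv ne ed rho C (\<lambda>e. projr (\<nu> (Inl e))) (\<lambda>v. projr (\<nu> (Inr v)))"
proof unfold_locales
  show "\<not> has_cycle ed C" by (rule assms)
  fix e assume "e \<in> C"
  thus "projr (\<nu> (Inl e)) = fst (ed e) \<or> projr (\<nu> (Inl e)) = snd (ed e)"
    "projr (\<nu> (Inl e)) \<noteq> rho"
    using matched_edge_row(2,3) by auto
next
  show "inj_on (\<lambda>e. projr (\<nu> (Inl e))) C"
  proof (rule inj_onI)
    fix e e' assume "e \<in> C" "e' \<in> C" "projr (\<nu> (Inl e)) = projr (\<nu> (Inl e'))"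
    hence "\<nu> (\<nu> (Inl e)) = \<nu> (\<nu> (Inl e'))"
      using matched_edge_row(1)[OF \<open>e \<in> C\<close>] matched_edge_row(1)[OF \<open>e' \<in> C\<close>] by simp
    thus "e = e'"
      using matching_labels(3)[OF InlI[OF \<open>e \<in> C\<close>]] matching_labels(3)[OF InlI[OF \<open>e' \<in> C\<close>]]
      by simp
  qed
next
  let ?free = "{1..nv} - insert rho ((\<lambda>e. projr (\<nu> (Inl e))) ` C)"
  show "perfect_matching_on ?free (\<lambda>v. projr (\<nu> (Inr v)))"
    unfolding perfect_matching_on_def
  proof
    fix v assume "v \<in> ?free"
    then obtain u where "\<nu> (Inr v) = Inr u" "\<nu> (Inr u) = Inr v" "u \<noteq> v" "u \<in> ?free"
      "\<exists>e\<in>{1..ne}. joins ed e v u"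
      by (rule matched_free_row)
    thus "projr (\<nu> (Inr v)) \<in> ?free \<and> projr (\<nu> (Inr v)) \<noteq> v
        \<and> projr (\<nu> (Inr (projr (\<nu> (Inr v))))) = v" by simp
  qed
  show "\<exists>e\<in>{1..ne}. joins ed e v (projr (\<nu> (Inr v)))" if v: "v \<in> ?free" for v
  proof -
    obtain u where "\<nu> (Inr v) = Inr u" "\<nu> (Inr u) = Inr v" "u \<noteq> v" "u \<in> ?free"
      "\<exists>e\<in>{1..ne}. joins ed e v u"
      using v by (rule matched_free_row)
    thus ?thesis by simp
  qed
qed

end

end

theorem mainTheorem10:
  fixes nv ne :: nat and ed :: "nat \<Rightarrow> nat \<times> nat" and rho :: nat and C :: "nat set"
  assumes "edge_graph nv ne ed"
    and "connected_graph nv ne ed"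
    and "rho \<in> {1..nv}"
    and "C \<subseteq> {1..ne}"
    and "inverse (\<Prod>i\<in>{1..nv} - {rho}. real (deg nv ne ed i))
           * det (block_mat nv ne ed C rho) \<noteq> 0"
  shows "dimer_rooted_forest nv ne ed rho C"
proof -
  interpret rooted_edge_set nv ne ed rho C using assms(1,3,4) by unfold_locales
  \<comment> \<open>Only the determinant factor matters.\<close>
  have det: "det (block_mat nv ne ed C rho) \<noteq> 0" using assms(5) by auto
  have acyclic: "\<not> has_cycle ed C" using block_mat_singular_if_cycle det by blast
  obtain \<nu> where \<nu>: "perfect_matching_on labels \<nu>"
    "\<And>x. x \<in> labels \<Longrightarrow> block_label_entry nv ne ed x (\<nu> x) \<noteq> 0"
    using block_mat_label_matching[OF det] by blast
  have "even (card C + (nv - 1))"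
    using perfect_matching_on_even_card[OF _ \<nu>(1)] card_labels finite_C by simp
  interpret matched_forest nv ne ed rho C "\<lambda>e. projr (\<nu> (Inl e))" "\<lambda>v. projr (\<nu> (Inr v))"
    using matched_forest_of_label_matching[OF \<nu> acyclic] .
  show ?thesis
    unfolding dimer_rooted_forest_def using assms(4) acyclic \<open>even _\<close> dimer_cover by blast
qed

end
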